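(* Let $\mathcal H$ be a finite-dimensional Hilbert space, let $P$ be an orthogonal projection on $\mathcal H$, and let $\mathcal E$ be a channel on $\mathcal L(\mathcal H)$ with operation elements $\{E_a\}$, i.e. $\mathcal E(\rho)=\sum_a E_a\rho E_a^\dagger$ with $\sum_a E_a^\dagger E_a={\bf 1}$. Let $\mathcal A$ be a subalgebra of $\mathcal L(P\mathcal H)$ closed under Hermitian conjugation, where operators on $P\mathcal H$ are regarded as operators $X$ on $\mathcal H$ with $X=PXP$ ($\mathcal A$ need not contain $P$). Then $\mathcal A$ is conserved by $\mathcal E$ for states in $P\mathcal H$, i.e. $$P\,\mathcal E^\dagger(X)\,P = PXP \quad\text{for all } X\in\mathcal A,$$ if and only if $[E_aP, X]=E_aPX-XE_aP=0$ for all operation elements $E_a$ and all $X\in\mathcal A$.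
   Context: $\mathcal L(\mathcal K)$ denotes the set of all linear operators on a Hilbert space $\mathcal K$. A channel is a completely positive trace-preserving linear map on $\mathcal L(\mathcal H)$; its dual (Heisenberg-picture) map is the unital completely positive map $\mathcal E^\dagger(X)=\sum_a E_a^\dagger X E_a$, characterized by $\mathrm{Tr}(\rho\,\mathcal E^\dagger(X))=\mathrm{Tr}(\mathcal E(\rho)X)$. *)

theory Defs
  imports "HOL-Analysis.Analysis"
begin

text \<open>Operators on the finite-dimensional Hilbert space H = complex^'n are
  represented as matrices of type complex^'n^'n (composition is ** ).\<close>

definition adj :: "complex^'n^'n \<Rightarrow> complex^'n^'n" where
  "adj A = (\<chi> i j. cnj (A $ j $ i))"

definition orth_projection :: "complex^'n^'n \<Rightarrow> bool" where
  "orth_projection P \<longleftrightarrow> P ** P = P \<and> adj P = P"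

definition kraus_channel :: "'a set \<Rightarrow> ('a \<Rightarrow> complex^'n^'n) \<Rightarrow> bool" where
  "kraus_channel I E \<longleftrightarrow> finite I \<and> (\<Sum>a\<in>I. adj (E a) ** E a) = mat 1"

definition dual_map :: "'a set \<Rightarrow> ('a \<Rightarrow> complex^'n^'n) \<Rightarrow> complex^'n^'n \<Rightarrow> complex^'n^'n" where
  "dual_map I E X = (\<Sum>a\<in>I. adj (E a) ** X ** E a)"

definition star_subalgebra_on :: "complex^'n^'n \<Rightarrow> (complex^'n^'n) set \<Rightarrow> bool" where
  "star_subalgebra_on P \<A> \<longleftrightarrow>
     (\<forall>X\<in>\<A>. P ** X ** P = X) \<and>
     0 \<in> \<A> \<and>
     (\<forall>X\<in>\<A>. \<forall>Y\<in>\<A>. X + Y \<in> \<A>) \<and>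
     (\<forall>c. \<forall>X\<in>\<A>. mat c ** X \<in> \<A>) \<and>
     (\<forall>X\<in>\<A>. \<forall>Y\<in>\<A>. X ** Y \<in> \<A>) \<and>
     (\<forall>X\<in>\<A>. adj X \<in> \<A>)"

end

theory Submission
  imports Defs
begin

text \<open>Write \<open>K\<^sub>a = E\<^sub>a P\<close> and \<open>T(M) = \<Sum>\<^sub>a K\<^sub>a\<^sup>\<dagger> M K\<^sub>a\<close>, so that
  \<open>T(M) = P \<E>\<^sup>\<dagger>(M) P\<close> and \<open>T(1) = P\<close> acts as the identity on \<open>\<A>\<close>. Conservation says
  that \<open>T\<close> fixes \<open>\<A>\<close> pointwise. Expanding,
  \<open>\<Sum>\<^sub>a [K\<^sub>a,X]\<^sup>\<dagger>[K\<^sub>a,X] = X\<^sup>\<dagger>T(1)X - X\<^sup>\<dagger>T(X) - T(X\<^sup>\<dagger>)X + T(X\<^sup>\<dagger>X)\<close>,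
  which vanishes for \<open>X \<in> \<A>\<close> because \<open>\<A>\<close> is closed under \<open>\<dagger>\<close> and products; a vanishing
  sum of positive operators \<open>D\<^sup>\<dagger>D\<close> forces every \<open>D = [K\<^sub>a,X]\<close> to vanish. Conversely, if
  every \<open>K\<^sub>a\<close> commutes with \<open>X\<close>, then \<open>T(X) = T(1)X = X\<close>.\<close>

lemma matrix_add_rdistrib: "((A::'a::semiring_1^'n^'m) + B) ** C = A ** C + B ** C"
  by (simp add: matrix_matrix_mult_def vec_eq_iff sum.distrib algebra_simps)

lemma matrix_diff_rdistrib: "((A::'a::ring_1^'n^'m) - B) ** C = A ** C - B ** C"
  by (simp add: matrix_matrix_mult_def vec_eq_iff sum_subtractf algebra_simps)

lemma matrix_diff_ldistrib: "(A::'a::ring_1^'n^'m) ** (B - C) = A ** B - A ** C"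
  by (simp add: matrix_matrix_mult_def vec_eq_iff sum_subtractf algebra_simps)

lemma matrix_sum_rdistrib:
  "finite I \<Longrightarrow> (\<Sum>a\<in>I. f a :: 'a::semiring_1^'n^'m) ** C = (\<Sum>a\<in>I. f a ** C)"
  by (induction I rule: finite_induct) (auto simp: matrix_add_rdistrib)

lemma matrix_sum_ldistrib:
  "finite I \<Longrightarrow> C ** (\<Sum>a\<in>I. f a :: 'a::semiring_1^'n^'m) = (\<Sum>a\<in>I. C ** f a)"
  by (induction I rule: finite_induct) (auto simp: matrix_add_ldistrib)

lemma adj_matrix_mult: "adj ((A::complex^'n^'n) ** B) = adj B ** adj A"
  by (simp add: adj_def matrix_matrix_mult_def vec_eq_iff mult.commute)

lemma adj_diff: "adj ((A::complex^'n^'n) - B) = adj A - adj B"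
  by (simp add: adj_def vec_eq_iff)

lemma diag_adj_mult_self:
  "(adj (D::complex^'n^'n) ** D) $ j $ j = of_real (\<Sum>k\<in>UNIV. (cmod (D $ k $ j))\<^sup>2)"
  unfolding adj_def matrix_matrix_mult_def of_real_sum
  by (simp add: complex_norm_square mult.commute del: of_real_power)

lemma sum_adj_mult_self_eq_0D:
  assumes "finite I" "(\<Sum>b\<in>I. adj (D b) ** (D b :: complex^'n^'n)) = 0" "a \<in> I"
  shows "D a = 0"
proof -
  have "D a $ k $ j = 0" for k j
  proof -
    have "of_real (\<Sum>b\<in>I. \<Sum>k\<in>UNIV. (cmod (D b $ k $ j))\<^sup>2) = (0::complex)"
      using arg_cong[OF assms(2), of "\<lambda>M. M $ j $ j"]
      by (simp only: sum_component diag_adj_mult_self of_real_sum zero_index)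
    then have total: "(\<Sum>b\<in>I. \<Sum>k\<in>UNIV. (cmod (D b $ k $ j))\<^sup>2) = 0"
      by (simp only: of_real_eq_0_iff)
    have column: "(\<Sum>k\<in>UNIV. (cmod (D a $ k $ j))\<^sup>2) = 0"
      by (rule sum_nonneg_0[OF assms(1) _ total assms(3)]) (simp add: sum_nonneg)
    have "(cmod (D a $ k $ j))\<^sup>2 = 0"
      by (rule sum_nonneg_0[OF finite _ column UNIV_I]) simp
    then show ?thesis
      by simp
  qed
  then show ?thesis
    by (simp add: vec_eq_iff)
qed

lemma adj_commutator_mult_self:
  fixes K X :: "complex^'n^'n"
  shows "adj (K ** X - X ** K) ** (K ** X - X ** K) =
    adj X ** (adj K ** mat 1 ** K) ** X - adj X ** (adj K ** X ** K)
      - (adj K ** adj X ** K) ** X + adj K ** (adj X ** X) ** K"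
  by (simp add: adj_diff adj_matrix_mult matrix_diff_ldistrib matrix_diff_rdistrib matrix_mul_assoc)

lemma sum_adj_commutator_mult_self:
  fixes K :: "'a \<Rightarrow> complex^'n^'n" and X :: "complex^'n^'n"
  assumes "finite I"
  shows "(\<Sum>a\<in>I. adj (K a ** X - X ** K a) ** (K a ** X - X ** K a)) =
    adj X ** dual_map I K (mat 1) ** X - adj X ** dual_map I K X
      - dual_map I K (adj X) ** X + dual_map I K (adj X ** X)"
  unfolding adj_commutator_mult_self dual_map_def
  by (simp add: sum.distrib sum_subtractf matrix_sum_ldistrib matrix_sum_rdistrib assms)

lemma dual_map_fixes_iff_commute:
  fixes K :: "'a \<Rightarrow> complex^'n^'n" and \<A> :: "(complex^'n^'n) set"
  assumes "finite I"
    and adj_closed: "\<forall>X\<in>\<A>. adj X \<in> \<A>"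
    and mult_closed: "\<forall>X\<in>\<A>. \<forall>Y\<in>\<A>. X ** Y \<in> \<A>"
    and unit: "\<forall>X\<in>\<A>. dual_map I K (mat 1) ** X = X"
  shows "(\<forall>X\<in>\<A>. dual_map I K X = X) \<longleftrightarrow> (\<forall>a\<in>I. \<forall>X\<in>\<A>. K a ** X - X ** K a = 0)"
proof
  assume fixed: "\<forall>X\<in>\<A>. dual_map I K X = X"
  show "\<forall>a\<in>I. \<forall>X\<in>\<A>. K a ** X - X ** K a = 0"
  proof (intro ballI)
    fix a X assume "a \<in> I" "X \<in> \<A>"
    have "(\<Sum>b\<in>I. adj (K b ** X - X ** K b) ** (K b ** X - X ** K b)) = 0"
      using \<open>X \<in> \<A>\<close> fixed unit adj_closed mult_closed
      by (simp add: sum_adj_commutator_mult_self \<open>finite I\<close> flip: matrix_mul_assoc)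
    then show "K a ** X - X ** K a = 0"
      using sum_adj_mult_self_eq_0D[of I "\<lambda>b. K b ** X - X ** K b" a] \<open>finite I\<close> \<open>a \<in> I\<close>
      by simp
  qed
next
  assume commute: "\<forall>a\<in>I. \<forall>X\<in>\<A>. K a ** X - X ** K a = 0"
  show "\<forall>X\<in>\<A>. dual_map I K X = X"
  proof
    fix X assume "X \<in> \<A>"
    have "X ** K a = K a ** X" if "a \<in> I" for a
      using commute \<open>X \<in> \<A>\<close> that by simp
    then have "dual_map I K X = (\<Sum>a\<in>I. adj (K a) ** K a ** X)"
      unfolding dual_map_def by (intro sum.cong) (simp_all flip: matrix_mul_assoc)
    also have "\<dots> = dual_map I K (mat 1) ** X"
      by (simp add: dual_map_def matrix_sum_rdistrib \<open>finite I\<close>)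
    finally show "dual_map I K X = X"
      using unit \<open>X \<in> \<A>\<close> by simp
  qed
qed

lemma dual_map_compress:
  assumes "finite I" "adj P = P"
  shows "dual_map I (\<lambda>a. E a ** P) M = P ** dual_map I E M ** P"
  using assms
  by (simp add: dual_map_def adj_matrix_mult matrix_sum_ldistrib matrix_sum_rdistrib matrix_mul_assoc)

theorem theorem1:
  fixes P :: "complex^'n^'n"
    and I :: "'a set" and E :: "'a \<Rightarrow> complex^'n^'n"
    and \<A> :: "(complex^'n^'n) set"
  assumes "orth_projection P"
    and "kraus_channel I E"
    and "star_subalgebra_on P \<A>"
  shows "(\<forall>X\<in>\<A>. P ** dual_map I E X ** P = P ** X ** P) \<longleftrightarrow>
         (\<forall>a\<in>I. \<forall>X\<in>\<A>. E a ** P ** X - X ** (E a ** P) = 0)"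
proof -
  have "P ** P = P" "adj P = P" "finite I" "dual_map I E (mat 1) = mat 1"
    using assms(1,2) by (auto simp: orth_projection_def kraus_channel_def dual_map_def)
  have compressed: "P ** X ** P = X" if "X \<in> \<A>" for X
    using assms(3) that by (simp add: star_subalgebra_on_def)
  then have "P ** X = X" if "X \<in> \<A>" for X
    using that \<open>P ** P = P\<close> by (metis matrix_mul_assoc)
  then have "\<forall>X\<in>\<A>. dual_map I (\<lambda>a. E a ** P) (mat 1) ** X = X"
    using \<open>P ** P = P\<close> \<open>dual_map I E (mat 1) = mat 1\<close>
    by (simp add: dual_map_compress \<open>finite I\<close> \<open>adj P = P\<close>)
  with assms(3) have "(\<forall>X\<in>\<A>. dual_map I (\<lambda>a. E a ** P) X = X) \<longleftrightarrow>
      (\<forall>a\<in>I. \<forall>X\<in>\<A>. E a ** P ** X - X ** (E a ** P) = 0)"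
    by (intro dual_map_fixes_iff_commute \<open>finite I\<close>) (auto simp: star_subalgebra_on_def)
  then show ?thesis
    using compressed by (simp add: dual_map_compress \<open>finite I\<close> \<open>adj P = P\<close>)
qed

end
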